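(* Let $A$ be a commutative ring, $\sigma$ a hereditary torsion theory on $A$-modules, and $M$ a totally $\sigma$-simple $A$-module with companion ideal $\mathfrak{h}\in\mathcal{L}(\sigma)$. Then: (1) $M\mathfrak{h}$ is not totally $\sigma$-torsion; hence $M\mathfrak{h}$ is the smallest submodule of $M$ that is not totally $\sigma$-torsion, and every submodule of $M$ that is not totally $\sigma$-torsion is itself totally $\sigma$-simple. (5) If $M'$ is a totally $\sigma$-simple $A$-module and $f:M\to M'$ is a surjective homomorphism, then $\ker f$ is totally $\sigma$-torsion.
   Context: $\mathcal{L}(\sigma)$ is the Gabriel filter of $\sigma$. A module $X$ is totally $\sigma$-torsion if $X\mathfrak{k}=0$ for some $\mathfrak{k}\in\mathcal{L}(\sigma)$. An $A$-module $M$ is totally $\sigma$-simple if $M$ is not totally $\sigma$-torsion and there exists $\mathfrak{h}\in\mathcal{L}(\sigma)$, called a companion ideal, such that $M\mathfrak{h}\subseteq H$ for every submodule $H\subseteq M$ that is not totally $\sigma$-torsion. *)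

theory Defs
  imports Complex_Main
begin

definition ring_ideal :: "'a::comm_ring_1 set \<Rightarrow> bool" where
  "ring_ideal I \<longleftrightarrow> 0 \<in> I \<and> (\<forall>x\<in>I. \<forall>y\<in>I. x + y \<in> I) \<and> (\<forall>r. \<forall>x\<in>I. r * x \<in> I)"

definition colon_ideal :: "'a::comm_ring_1 set \<Rightarrow> 'a \<Rightarrow> 'a set" where
  "colon_ideal J a = {x. x * a \<in> J}"

text \<open>Gabriel filter (Stenstrom): a nonempty set of ideals satisfying T1--T3.
  The hereditary torsion theory sigma is represented by its Gabriel filter L(sigma).\<close>
definition gabriel_filter :: "'a::comm_ring_1 set set \<Rightarrow> bool" where
  "gabriel_filter F \<longleftrightarrow>
     (\<forall>I\<in>F. ring_ideal I) \<and> UNIV \<in> F \<and>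
     (\<forall>I\<in>F. \<forall>J. ring_ideal J \<and> I \<subseteq> J \<longrightarrow> J \<in> F) \<and>
     (\<forall>I\<in>F. \<forall>a. colon_ideal I a \<in> F) \<and>
     (\<forall>I\<in>F. \<forall>J. ring_ideal J \<and> (\<forall>a\<in>I. colon_ideal J a \<in> F) \<longrightarrow> J \<in> F)"

definition tot_torsion :: "'a::comm_ring_1 set set \<Rightarrow> ('a \<Rightarrow> 'b::ab_group_add \<Rightarrow> 'b) \<Rightarrow> 'b set \<Rightarrow> bool" where
  "tot_torsion F scale X \<longleftrightarrow> (\<exists>k\<in>F. \<forall>x\<in>X. \<forall>a\<in>k. scale a x = 0)"

definition mod_ideal_prod :: "('a::comm_ring_1 \<Rightarrow> 'b::ab_group_add \<Rightarrow> 'b) \<Rightarrow> 'b set \<Rightarrow> 'a set \<Rightarrow> 'b set" where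
  "mod_ideal_prod scale X I = module.span scale {scale a x | a x. a \<in> I \<and> x \<in> X}"

text \<open>h is a companion ideal of the totally sigma-simple module M (M a submodule of the ambient module).\<close>
definition tot_simple_companion :: "'a::comm_ring_1 set set \<Rightarrow> ('a \<Rightarrow> 'b::ab_group_add \<Rightarrow> 'b) \<Rightarrow> 'b set \<Rightarrow> 'a set \<Rightarrow> bool" where
  "tot_simple_companion F scale M h \<longleftrightarrow>
     \<not> tot_torsion F scale M \<and> h \<in> F \<and>
     (\<forall>H. module.subspace scale H \<and> H \<subseteq> M \<and> \<not> tot_torsion F scale H \<longrightarrow> mod_ideal_prod scale M h \<subseteq> H)"

definition tot_simple :: "'a::comm_ring_1 set set \<Rightarrow> ('a \<Rightarrow> 'b::ab_group_add \<Rightarrow> 'b) \<Rightarrow> 'b set \<Rightarrow> bool" where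
  "tot_simple F scale M \<longleftrightarrow> (\<exists>h. tot_simple_companion F scale M h)"

definition module_hom_on :: "('a \<Rightarrow> 'b::ab_group_add \<Rightarrow> 'b) \<Rightarrow> ('a \<Rightarrow> 'c::ab_group_add \<Rightarrow> 'c) \<Rightarrow> 'b set \<Rightarrow> 'c set \<Rightarrow> ('b \<Rightarrow> 'c) \<Rightarrow> bool" where
  "module_hom_on s1 s2 M M' f \<longleftrightarrow> f ` M \<subseteq> M' \<and>
     (\<forall>x\<in>M. \<forall>y\<in>M. f (x + y) = f x + f y) \<and> (\<forall>a. \<forall>x\<in>M. f (s1 a x) = s2 a (f x))"

end

theory Submission
  imports Defs
begin

text \<open>The companion ideal h lies in the Gabriel filter, so if M h is killed by k \<in> L(\<sigma>), then
  for each a \<in> h the colon ideal (Ann M : a) contains k; axiom T3 then puts Ann M into L(\<sigma>).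
  Hence M h is not totally torsion, and by the companion property it is the least submodule that
  is not; the same h then serves as companion ideal for every such submodule, since H h \<subseteq> M h.
  Finally, for a surjection f onto a totally simple M', a non-torsion kernel would contain M h, so
  h would annihilate f ` M = M', making M' totally torsion.\<close>

definition annihilator :: "('a::comm_ring_1 \<Rightarrow> 'b::ab_group_add \<Rightarrow> 'b) \<Rightarrow> 'b set \<Rightarrow> 'a set" where
  "annihilator scale X = {r. \<forall>x\<in>X. scale r x = 0}"

lemma tot_torsionI:
  assumes "k \<in> F" and "\<And>x a. x \<in> X \<Longrightarrow> a \<in> k \<Longrightarrow> scale a x = 0"
  shows "tot_torsion F scale X"
  using assms unfolding tot_torsion_def by blast

lemma gabriel_filter_upward_closed:
  assumes "gabriel_filter F" and "I \<in> F" and "ring_ideal J" and "I \<subseteq> J"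
  shows "J \<in> F"
  using assms unfolding gabriel_filter_def by blast

lemma gabriel_filter_colon_closed:
  assumes "gabriel_filter F" and "I \<in> F" and "ring_ideal J" and "\<And>a. a \<in> I \<Longrightarrow> colon_ideal J a \<in> F"
  shows "J \<in> F"
  using assms unfolding gabriel_filter_def by blast

lemma ring_ideal_colon_ideal:
  assumes "ring_ideal J"
  shows "ring_ideal (colon_ideal J a)"
  using assms unfolding ring_ideal_def colon_ideal_def by (simp add: distrib_right mult.assoc)

context module
begin

lemma ring_ideal_annihilator: "ring_ideal (annihilator scale X)"
  unfolding ring_ideal_def annihilator_def by (simp add: scale_left_distrib flip: scale_scale)

lemma tot_torsion_iff_annihilator:
  assumes "gabriel_filter F"
  shows "tot_torsion F scale X \<longleftrightarrow> annihilator scale X \<in> F"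
proof
  assume "tot_torsion F scale X"
  then obtain k where "k \<in> F" and "k \<subseteq> annihilator scale X"
    unfolding tot_torsion_def annihilator_def by blast
  then show "annihilator scale X \<in> F"
    by (rule gabriel_filter_upward_closed[OF assms _ ring_ideal_annihilator])
next
  assume "annihilator scale X \<in> F"
  then show "tot_torsion F scale X"
    by (rule tot_torsionI) (simp add: annihilator_def)
qed

lemma scale_mem_mod_ideal_prod:
  assumes "a \<in> I" and "x \<in> X"
  shows "scale a x \<in> mod_ideal_prod scale X I"
  unfolding mod_ideal_prod_def by (rule span_base) (use assms in blast)

lemma subspace_mod_ideal_prod: "subspace (mod_ideal_prod scale X I)"
  unfolding mod_ideal_prod_def by (rule subspace_span)

lemma mod_ideal_prod_subset:
  assumes "subspace M"
  shows "mod_ideal_prod scale M I \<subseteq> M"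
  unfolding mod_ideal_prod_def
  by (rule span_minimal) (use assms in \<open>auto simp: subspace_def\<close>)

lemma mod_ideal_prod_mono:
  assumes "X \<subseteq> Y"
  shows "mod_ideal_prod scale X I \<subseteq> mod_ideal_prod scale Y I"
  unfolding mod_ideal_prod_def by (rule span_mono) (use assms in blast)

lemma tot_torsion_of_tot_torsion_mod_ideal_prod:
  assumes gf: "gabriel_filter F" and "h \<in> F"
    and "tot_torsion F scale (mod_ideal_prod scale M h)"
  shows "tot_torsion F scale M"
proof -
  obtain k where "k \<in> F" and k: "\<And>x a. x \<in> mod_ideal_prod scale M h \<Longrightarrow> a \<in> k \<Longrightarrow> scale a x = 0"
    using assms(3) unfolding tot_torsion_def by blast
  have "colon_ideal (annihilator scale M) a \<in> F" if "a \<in> h" for a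
  proof (rule gabriel_filter_upward_closed[OF gf \<open>k \<in> F\<close>])
    show "ring_ideal (colon_ideal (annihilator scale M) a)"
      by (rule ring_ideal_colon_ideal[OF ring_ideal_annihilator])
    show "k \<subseteq> colon_ideal (annihilator scale M) a"
      using k scale_mem_mod_ideal_prod[OF \<open>a \<in> h\<close>]
      by (auto simp: colon_ideal_def annihilator_def simp flip: scale_scale)
  qed
  then have "annihilator scale M \<in> F"
    by (rule gabriel_filter_colon_closed[OF gf \<open>h \<in> F\<close> ring_ideal_annihilator])
  then show ?thesis
    using tot_torsion_iff_annihilator[OF gf] by blast
qed

lemma not_tot_torsion_mod_ideal_prod_companion:
  assumes "gabriel_filter F" and "tot_simple_companion F scale M h"
  shows "\<not> tot_torsion F scale (mod_ideal_prod scale M h)"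
  using assms tot_torsion_of_tot_torsion_mod_ideal_prod unfolding tot_simple_companion_def by blast

lemma tot_simple_companion_submodule:
  assumes "tot_simple_companion F scale M h"
    and "subspace H" and "H \<subseteq> M" and "\<not> tot_torsion F scale H"
  shows "tot_simple_companion F scale H h"
  unfolding tot_simple_companion_def
proof (intro conjI allI impI)
  show "\<not> tot_torsion F scale H" and "h \<in> F"
    using assms unfolding tot_simple_companion_def by blast+
next
  fix K assume K: "subspace K \<and> K \<subseteq> H \<and> \<not> tot_torsion F scale K"
  have "mod_ideal_prod scale H h \<subseteq> mod_ideal_prod scale M h"
    by (rule mod_ideal_prod_mono[OF \<open>H \<subseteq> M\<close>])
  also have "\<dots> \<subseteq> K"
    using assms(1,3) K unfolding tot_simple_companion_def by blast
  finally show "mod_ideal_prod scale H h \<subseteq> K" .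
qed

lemma subspace_kernel:
  assumes "module scale'" and "subspace M" and "module_hom_on scale scale' M M' f"
  shows "subspace {x \<in> M. f x = 0}"
proof -
  interpret target: module scale' by (rule assms(1))
  have add: "\<And>x y. x \<in> M \<Longrightarrow> y \<in> M \<Longrightarrow> f (x + y) = f x + f y"
    and hom_scale: "\<And>a x. x \<in> M \<Longrightarrow> f (scale a x) = scale' a (f x)"
    using assms(3) unfolding module_hom_on_def by auto
  have "0 \<in> M" using assms(2) by (rule subspace_0)
  then have "f 0 = 0"
    using add[of 0 0] by simp
  then show ?thesis
    using assms(2) add hom_scale unfolding subspace_def by (simp add: target.scale_zero_right)
qed

lemma kernel_tot_torsion_onto_tot_simple:
  assumes "gabriel_filter F" and "tot_simple_companion F scale M h"
    and "module scale'" and "subspace M" and "tot_simple F scale' M'"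
    and hom: "module_hom_on scale scale' M M' f" and onto: "f ` M = M'"
  shows "tot_torsion F scale {x \<in> M. f x = 0}"
proof (rule ccontr)
  assume "\<not> tot_torsion F scale {x \<in> M. f x = 0}"
  then have kernel: "mod_ideal_prod scale M h \<subseteq> {x \<in> M. f x = 0}"
    using assms(2) subspace_kernel[OF assms(3,4) hom] unfolding tot_simple_companion_def by blast
  have "tot_torsion F scale' M'"
  proof (rule tot_torsionI)
    show "h \<in> F" using assms(2) unfolding tot_simple_companion_def by blast
  next
    fix y a assume "y \<in> M'" and "a \<in> h"
    then obtain x where "x \<in> M" and "y = f x" using onto by blast
    then have "f (scale a x) = 0"
      using kernel scale_mem_mod_ideal_prod[OF \<open>a \<in> h\<close>] by blast
    then show "scale' a y = 0"
      using hom \<open>x \<in> M\<close> \<open>y = f x\<close> unfolding module_hom_on_def by simp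
  qed
  then show False
    using assms(5) unfolding tot_simple_def tot_simple_companion_def by blast
qed

end

theorem mainTheorem19:
  fixes F :: "'a::comm_ring_1 set set"
    and scale :: "'a \<Rightarrow> 'b::ab_group_add \<Rightarrow> 'b" and M :: "'b set" and h :: "'a set"
    and scale' :: "'a \<Rightarrow> 'c::ab_group_add \<Rightarrow> 'c" and M' :: "'c set" and f :: "'b \<Rightarrow> 'c"
  assumes "gabriel_filter F"
    and "module scale" and "module.subspace scale M"
    and "tot_simple_companion F scale M h"
  shows "\<not> tot_torsion F scale (mod_ideal_prod scale M h)
    \<and> (module.subspace scale (mod_ideal_prod scale M h) \<and> mod_ideal_prod scale M h \<subseteq> M
       \<and> (\<forall>H. module.subspace scale H \<and> H \<subseteq> M \<and> \<not> tot_torsion F scale H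
              \<longrightarrow> mod_ideal_prod scale M h \<subseteq> H))
    \<and> (\<forall>H. module.subspace scale H \<and> H \<subseteq> M \<and> \<not> tot_torsion F scale H
              \<longrightarrow> tot_simple F scale H)
    \<and> (module scale' \<and> module.subspace scale' M' \<and> tot_simple F scale' M'
        \<and> module_hom_on scale scale' M M' f \<and> f ` M = M'
        \<longrightarrow> tot_torsion F scale {x \<in> M. f x = 0})"
proof -
  interpret module scale by (rule assms(2))
  have least: "\<forall>H. subspace H \<and> H \<subseteq> M \<and> \<not> tot_torsion F scale H \<longrightarrow> mod_ideal_prod scale M h \<subseteq> H"
    using assms(4) unfolding tot_simple_companion_def by blast
  have submodules: "\<forall>H. subspace H \<and> H \<subseteq> M \<and> \<not> tot_torsion F scale H \<longrightarrow> tot_simple F scale H"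
    using tot_simple_companion_submodule[OF assms(4)] unfolding tot_simple_def by blast
  show ?thesis
  proof (intro conjI impI)
    show "\<not> tot_torsion F scale (mod_ideal_prod scale M h)"
      by (rule not_tot_torsion_mod_ideal_prod_companion[OF assms(1,4)])
  next
    assume "module scale' \<and> module.subspace scale' M' \<and> tot_simple F scale' M'
        \<and> module_hom_on scale scale' M M' f \<and> f ` M = M'"
    then show "tot_torsion F scale {x \<in> M. f x = 0}"
      using kernel_tot_torsion_onto_tot_simple[OF assms(1,4) _ assms(3)] by blast
  qed (fact subspace_mod_ideal_prod mod_ideal_prod_subset[OF assms(3)] least submodules)+
qed

end
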